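(* Let $g\ge1$ and let $\mathcal M_{2g+1}$, $V^{(2g+1)}$, the $\mathrm{CS}_2$ flows $\partial/\partial t_j$, $\mathcal M_A$, $\widetilde{\mathcal S}$, $E$ and $\widetilde{\mathcal Q}$ be as in the context. For $i=0,\dots,g-1$ consider the vector field on $\mathcal M_A$ $$\frac{dX(\lambda)}{dt}=\big[(\lambda^{i-g}X(\lambda))_+,X(\lambda)\big],$$ which is tangent to $\widetilde{\mathcal S}$. Then its projection onto $T\widetilde{\mathcal Q}$ along $E$ (according to the splitting $T\widetilde{\mathcal S}=T\widetilde{\mathcal Q}\oplus E$ at points of $\widetilde{\mathcal Q}$) coincides, under the identification of $\mathcal M_{2g+1}$ with $\widetilde{\mathcal Q}$ via $h\mapsto V^{(2g+1)}(h)$, with the $\mathrm{KdV}_{2g+1}$ flow, i.e. with the restriction to $\mathcal M_{2g+1}$ of the $\mathrm{CS}_2$ flow $\partial/\partial t_{2i+1}$. Equivalently, the projections of these vector fields to the quotient $\widetilde{\mathcal N}=\widetilde{\mathcal S}/E$ coincide with the $\mathrm{KdV}_{2g+1}$ systems.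
   Context: Given a formal Laurent series $h=z+\sum_{l\ge1}h_lz^{-l}$, put $\lambda=z^2$ and define $H^{(0)}=1$, $H^{(1)}=h$, $H^{(2)}=z^2$, $H^{(k+2)}=z^2H^{(k)}-H^k_1h-H^k_2$ ($k\ge1$), where $H^k_l$ is the coefficient of $z^{-l}$ in $H^{(k)}$ (so $H^1_l=h_l$). Each $H^{(k)}$ and each series $H^{(j+1)}+\sum_{l=1}^jh_lH^{(j-l)}+H^j_1$ can be written uniquely as $a(\lambda)+b(\lambda)h$ with $a,b$ polynomials. $V^{(j)}$ is the $2\times2$ polynomial matrix with first row $(p_j,q_j)$ where $H^{(j)}=p_j+q_jh$, and second row $(a_j,b_j)$ where $H^{(j+1)}+\sum_{l=1}^jh_lH^{(j-l)}+H^j_1=a_j+b_jh$. The $\mathrm{CS}_2$ flows are $\partial h/\partial t_j=-hH^{(j)}+H^{(j+1)}+\sum_{l=1}^jh_lH^{(j-l)}+H^j_1$; they commute. $\mathcal M_{2g+1}$ is the set of $h$ with $\partial h/\partial t_{2g+1}=0$; it is invariant under all $\mathrm{CS}_2$ flows, coordinatized by $(h_1,\dots,h_{2g+1})$, and the restricted flows form the $\mathrm{KdV}_{2g+1}$ system (the stationary reductions of KdV). $\mathcal M_A=\{X(\lambda)=\lambda^{g+1}A+\sum_{i=0}^g\lambda^iX_i\mid X_i\in\mathfrak{sl}(2)\}$ with $A=\begin{pmatrix}0&0\\1&0\end{pmatrix}$; $H_i$ is the coefficient of $\lambda^i$ in $\tfrac12\mathrm{Tr}\,X(\lambda)^2$;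 $\widetilde{\mathcal S}$ is the submanifold $H_{2g+1}=1$, $H_i=0$ for $g+1\le i\le2g$; $E$ is the rank-one distribution on $\widetilde{\mathcal S}$ spanned by $\dot X(\lambda)=[A,X(\lambda)]$; $\widetilde{\mathcal Q}\subset\widetilde{\mathcal S}$ is the image of $h\mapsto V^{(2g+1)}(h)$ on $\mathcal M_{2g+1}$, which lies in $\widetilde{\mathcal S}$, is injective, and is transversal to $E$. $(\cdot)_+$ denotes projection onto nonnegative powers of $\lambda$. *)

theory Defs
  imports "HOL-Analysis.Analysis" "HOL-Computational_Algebra.Polynomial"
          "HOL-Computational_Algebra.Formal_Laurent_Series"
begin

text \<open>Formal Laurent series in z are complex fls; z = fls_X, lambda = z^2.
  The coefficient of z^(-l) of a series F is fls_nth F (- int l).\<close>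

definition is_h :: "complex fls \<Rightarrow> bool" where
  "is_h h \<longleftrightarrow> fls_nth h 1 = 1 \<and> (\<forall>n::int. n \<ge> 0 \<and> n \<noteq> 1 \<longrightarrow> fls_nth h n = 0)"

definition hc :: "complex fls \<Rightarrow> nat \<Rightarrow> complex" where
  "hc F l = fls_nth F (- int l)"

fun Hs :: "complex fls \<Rightarrow> nat \<Rightarrow> complex fls" where
  "Hs h 0 = 1"
| "Hs h (Suc 0) = h"
| "Hs h (Suc (Suc 0)) = fls_X ^ 2"
| "Hs h (Suc (Suc (Suc k))) =
     fls_X ^ 2 * Hs h (Suc k) - fls_const (hc (Hs h (Suc k)) 1) * h
       - fls_const (hc (Hs h (Suc k)) 2)"

definition Rs :: "complex fls \<Rightarrow> nat \<Rightarrow> complex fls" where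
  "Rs h j = Hs h (Suc j) + (\<Sum>l=1..j. fls_const (hc h l) * Hs h (j - l))
            + fls_const (hc (Hs h j) 1)"

definition flow :: "complex fls \<Rightarrow> nat \<Rightarrow> complex fls" where
  "flow h j = - h * Hs h j + Rs h j"

definition eval_lam :: "complex poly \<Rightarrow> complex fls" where
  "eval_lam p = poly (map_poly fls_const p) (fls_X ^ 2)"

definition decomp :: "complex fls \<Rightarrow> complex fls \<Rightarrow> complex poly \<times> complex poly" where
  "decomp h F = (THE ab. F = eval_lam (fst ab) + eval_lam (snd ab) * h)"

definition mat2 :: "'a \<Rightarrow> 'a \<Rightarrow> 'a \<Rightarrow> 'a \<Rightarrow> 'a ^ 2 ^ 2" where
  "mat2 a b c d = (\<chi> r s. if r = 1 then (if s = 1 then a else b) else (if s = 1 then c else d))"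

definition Vmat :: "complex fls \<Rightarrow> nat \<Rightarrow> complex poly ^ 2 ^ 2" where
  "Vmat h j = mat2 (fst (decomp h (Hs h j))) (snd (decomp h (Hs h j)))
                   (fst (decomp h (Rs h j))) (snd (decomp h (Rs h j)))"

definition Amat :: "complex poly ^ 2 ^ 2" where
  "Amat = mat2 0 0 1 0"

definition comm :: "complex poly ^ 2 ^ 2 \<Rightarrow> complex poly ^ 2 ^ 2 \<Rightarrow> complex poly ^ 2 ^ 2" where
  "comm P Q = P ** Q - Q ** P"

definition cscale :: "complex \<Rightarrow> complex poly ^ 2 ^ 2 \<Rightarrow> complex poly ^ 2 ^ 2" where
  "cscale c M = (\<chi> r s. smult c (M $ r $ s))"

text \<open>(lambda^(-k) p)_+ : drop the k lowest coefficients.\<close>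
definition plus_shift :: "nat \<Rightarrow> complex poly \<Rightarrow> complex poly" where
  "plus_shift k p = Poly (drop k (coeffs p))"

definition plus_mat :: "nat \<Rightarrow> complex poly ^ 2 ^ 2 \<Rightarrow> complex poly ^ 2 ^ 2" where
  "plus_mat k M = (\<chi> r s. plus_shift k (M $ r $ s))"

end

theory Submission
  imports Defs
begin

(* A series a(lambda) + b(lambda) h without nonnegative powers of z vanishes: a nonzero b would
   contribute its leading coefficient at the odd power z^(2 deg b + 1), which a(lambda) cannot
   reach. So the decomposition is unique and identities between decompositions can be checked on
   nonnegative coefficients, where H^(k) = z^k + O(z^-1) and dh/dt_j = O(z^-1).

   For N = m + 2k, truncating lambda^-k V^(N) therefore gives the first row of V^(m); on the second
   row R^(N) = h H^(N) (this is dh/dt_N = 0) yields R^(m) up to a constant, so the truncation is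
   V^(m) + delta A. Differentiating H^(N) = z^N + O(z^-1) and R^(N) = h H^(N) + O(z^-1) along
   h + eps f determines the derivative of V^(N) by the combinations -q f and (H^(N) - b) f, and the
   quadratic relation q h^2 + (p - b) h - a = 0 turns these into the rows of [V^(m), V^(N)] for
   f = dh/dt_m. Differentiability holds because the decomposition depends continuously on finitely
   many nonnegative coefficients, which keeps the second-order remainders bounded. *)

section \<open>Degree bounds for formal Laurent series\<close>

definition fls_deg_le :: "'a::zero fls \<Rightarrow> int \<Rightarrow> bool" where
  "fls_deg_le F d \<longleftrightarrow> (\<forall>n>d. fls_nth F n = 0)"

lemma fls_deg_leD: "fls_deg_le F d \<Longrightarrow> d < n \<Longrightarrow> fls_nth F n = 0"
  by (simp add: fls_deg_le_def)

lemma fls_deg_le_mono: "fls_deg_le F d \<Longrightarrow> d \<le> d' \<Longrightarrow> fls_deg_le F d'"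
  by (simp add: fls_deg_le_def)

lemma fls_deg_le_0 [simp]: "fls_deg_le 0 d"
  by (simp add: fls_deg_le_def)

lemma fls_deg_le_const: "0 \<le> d \<Longrightarrow> fls_deg_le (fls_const c) d"
  by (simp add: fls_deg_le_def)

lemma fls_deg_le_add: "fls_deg_le F d \<Longrightarrow> fls_deg_le G d \<Longrightarrow> fls_deg_le (F + G) d"
  by (simp add: fls_deg_le_def)

lemma fls_deg_le_diff:
  "fls_deg_le F d \<Longrightarrow> fls_deg_le G d \<Longrightarrow> fls_deg_le (F - G :: 'a::group_add fls) d"
  by (simp add: fls_deg_le_def)

lemma fls_deg_le_const_mult:
  "fls_deg_le F d \<Longrightarrow> fls_deg_le (fls_const c * F :: 'a::{comm_monoid_add,mult_zero} fls) d"
  by (simp add: fls_deg_le_def)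

lemma fls_deg_le_sum:
  "(\<And>x. x \<in> S \<Longrightarrow> fls_deg_le (f x) d) \<Longrightarrow> fls_deg_le (sum f S) d"
  by (simp add: fls_deg_le_def fls_nth_sum)

lemma fls_deg_le_mult:
  fixes F G :: "'a::semiring_0 fls"
  assumes F: "fls_deg_le F a" and G: "fls_deg_le G b"
  shows "fls_deg_le (F * G) (a + b)"
  unfolding fls_deg_le_def
proof (intro allI impI)
  fix n assume n: "a + b < n"
  have "fls_nth F i * fls_nth G (n - i) = 0" for i
    using F G n by (cases "a < i") (auto simp: fls_deg_le_def)
  then show "fls_nth (F * G) n = 0"
    by (simp add: fls_times_nth(2))
qed

section \<open>Polynomials in \<open>\<lambda> = z\<^sup>2\<close>\<close>

lemma eval_lam_pCons: "eval_lam (pCons a p) = fls_const a + fls_X ^ 2 * eval_lam p"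
  by (simp add: eval_lam_def map_poly_pCons)

lemma fls_nth_eval_lam:
  "fls_nth (eval_lam p) n = (if 0 \<le> n \<and> even n then coeff p (nat (n div 2)) else 0)"
proof (induction p arbitrary: n rule: pCons_induct)
  case 0
  then show ?case by (simp add: eval_lam_def)
next
  case (pCons a p)
  have "fls_nth (eval_lam (pCons a p)) n = (if n = 0 then a else 0) + fls_nth (eval_lam p) (n - 2)"
    by (simp add: eval_lam_pCons fls_X_power_times_conv_shift)
  moreover have "nat (n div 2) = Suc (nat ((n - 2) div 2))" if "2 \<le> n" "even n"
    using that by (auto elim!: evenE)
  moreover have "n = 0" if "0 \<le> n" "even n" "n < 2"
    using that by (auto elim!: evenE)
  ultimately show ?case
    using pCons.IH[of "n - 2"] by (auto simp: coeff_pCons)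
qed

lemma eval_lam_0 [simp]: "eval_lam 0 = 0"
  by (simp add: eval_lam_def)

lemma eval_lam_const [simp]: "eval_lam [:c:] = fls_const c"
  by (simp add: eval_lam_pCons)

lemma eval_lam_1 [simp]: "eval_lam 1 = 1"
  by (simp add: eval_lam_def)

lemma eval_lam_lambda: "eval_lam [:0, 1:] = fls_X ^ 2"
  by (simp add: eval_lam_pCons)

lemma eval_lam_add [simp]: "eval_lam (p + q) = eval_lam p + eval_lam q"
  by (rule fls_eqI) (simp add: fls_nth_eval_lam)

lemma eval_lam_smult [simp]: "eval_lam (smult c p) = fls_const c * eval_lam p"
  by (rule fls_eqI) (simp add: fls_nth_eval_lam)

lemma eval_lam_diff [simp]: "eval_lam (p - q) = eval_lam p - eval_lam q"
  by (rule fls_eqI) (simp add: fls_nth_eval_lam)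

lemma eval_lam_mult [simp]: "eval_lam (p * q) = eval_lam p * eval_lam q"
proof (induction p rule: pCons_induct)
  case (pCons a p)
  have "eval_lam (pCons a p * q) = fls_const a * eval_lam q + fls_X ^ 2 * (eval_lam p * eval_lam q)"
    by (simp add: eval_lam_pCons pCons.IH)
  then show ?case
    by (simp add: eval_lam_pCons algebra_simps)
qed simp

lemma eval_lam_monom: "eval_lam (monom c j) = fls_const c * fls_X ^ (2 * j)"
  by (rule fls_eqI) (auto simp: fls_nth_eval_lam fls_X_power_times_conv_shift)

lemma fls_deg_le_eval_lam: "fls_deg_le (eval_lam p) (2 * int (degree p))"
  by (auto simp: fls_deg_le_def fls_nth_eval_lam coeff_eq_0 elim!: evenE)

section \<open>The decomposition \<open>a(\<lambda>) + b(\<lambda>) h\<close>\<close>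

abbreviation lcomb :: "complex fls \<Rightarrow> complex poly \<Rightarrow> complex poly \<Rightarrow> complex fls" where
  "lcomb h a b \<equiv> eval_lam a + eval_lam b * h"

lemma is_h_nth: "is_h h \<Longrightarrow> 0 \<le> n \<Longrightarrow> fls_nth h n = (if n = 1 then 1 else 0)"
  by (auto simp: is_h_def)

lemma fls_deg_le_h: "is_h h \<Longrightarrow> fls_deg_le h 1"
  by (auto simp: fls_deg_le_def is_h_def)

lemma fls_deg_le_h_minus_X: "is_h h \<Longrightarrow> fls_deg_le (h - fls_X) (-1)"
  by (auto simp: fls_deg_le_def is_h_def)

lemma is_h_add_const_mult: "is_h h \<Longrightarrow> fls_deg_le f (-1) \<Longrightarrow> is_h (h + fls_const e * f)"
  by (auto simp: is_h_def fls_deg_le_def)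

lemma lcomb_deg_le_neg_imp_0:
  assumes h: "is_h h" and L: "fls_deg_le (lcomb h a b) (-1)"
  shows "a = 0 \<and> b = 0"
proof -
  have b: "b = 0"
  proof (rule ccontr)
    assume "b \<noteq> 0"
    define N where "N = 2 * int (degree b) + 1"
    have "fls_nth (eval_lam b * (h - fls_X)) N = 0"
      using fls_deg_le_mult[OF fls_deg_le_eval_lam fls_deg_le_h_minus_X[OF h]]
      by (rule fls_deg_leD) (simp add: N_def)
    moreover have "fls_nth (eval_lam b * fls_X) N = lead_coeff b"
      by (simp add: fls_X_times_conv_shift fls_nth_eval_lam N_def)
    moreover have "fls_nth (eval_lam a) N = 0"
      by (simp add: fls_nth_eval_lam N_def)
    moreover have "fls_nth (lcomb h a b) N = 0"
      using L by (rule fls_deg_leD) (simp add: N_def)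
    moreover have "eval_lam b * h = eval_lam b * fls_X + eval_lam b * (h - fls_X)"
      by (simp add: algebra_simps)
    ultimately have "lead_coeff b = 0"
      by simp
    with \<open>b \<noteq> 0\<close> show False
      by simp
  qed
  have "coeff a j = 0" for j
    using fls_deg_leD[OF L, of "2 * int j"] b by (simp add: fls_nth_eval_lam)
  with b show ?thesis
    by (simp add: poly_eq_iff)
qed

lemma decomp_eq:
  assumes h: "is_h h" and F: "F = lcomb h a b"
  shows "decomp h F = (a, b)"
  unfolding decomp_def
proof (rule the_equality)
  fix ab assume ab: "F = lcomb h (fst ab) (snd ab)"
  have "lcomb h (fst ab - a) (snd ab - b) = 0"
    using ab F by (simp add: algebra_simps)
  then have "fst ab - a = 0 \<and> snd ab - b = 0"
    using lcomb_deg_le_neg_imp_0[OF h] by (metis fls_deg_le_0)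
  then show "ab = (a, b)"
    by (simp add: prod_eq_iff)
qed (use F in simp)

definition decomposable :: "complex fls \<Rightarrow> complex fls \<Rightarrow> bool" where
  "decomposable h F \<longleftrightarrow> (\<exists>a b. F = lcomb h a b)"

lemma lcomb_decomp:
  assumes "is_h h" and "decomposable h F"
  shows "lcomb h (fst (decomp h F)) (snd (decomp h F)) = F"
  using assms decomp_eq by (auto simp: decomposable_def)

lemma decomposable_add: "decomposable h F \<Longrightarrow> decomposable h G \<Longrightarrow> decomposable h (F + G)"
proof (unfold decomposable_def, elim exE)
  fix a b a' b' assume "F = lcomb h a b" "G = lcomb h a' b'"
  then have "F + G = lcomb h (a + a') (b + b')"
    by (simp add: algebra_simps)
  then show "\<exists>a b. F + G = lcomb h a b" by blast
qed

lemma decomposable_const_mult: "decomposable h F \<Longrightarrow> decomposable h (fls_const c * F)"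
proof (unfold decomposable_def, elim exE)
  fix a b assume "F = lcomb h a b"
  then have "fls_const c * F = lcomb h (smult c a) (smult c b)"
    by (simp add: algebra_simps)
  then show "\<exists>a b. fls_const c * F = lcomb h a b" by blast
qed

lemma decomposable_const: "decomposable h (fls_const c)"
proof -
  have "fls_const c = lcomb h [:c:] 0" by simp
  then show ?thesis unfolding decomposable_def by blast
qed

lemma decomposable_sum: "(\<And>x. x \<in> S \<Longrightarrow> decomposable h (f x)) \<Longrightarrow> decomposable h (sum f S)"
  by (induction S rule: infinite_finite_induct)
    (auto intro: decomposable_add decomposable_const[of h 0, simplified])

lemma Hs_decomposable: "decomposable h (Hs h k)"
proof (induction h k rule: Hs.induct)
  case (1 h)
  show ?case using decomposable_const[of h 1] by simp
next
  case (2 h)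
  have "Hs h (Suc 0) = lcomb h 0 1" by simp
  then show ?case unfolding decomposable_def by blast
next
  case (3 h)
  have "Hs h 2 = lcomb h [:0, 1:] 0" by (simp add: eval_lam_lambda numeral_2_eq_2)
  then show ?case unfolding decomposable_def numeral_2_eq_2 by blast
next
  case (4 h k)
  then obtain a b where ab: "Hs h (Suc k) = lcomb h a b"
    by (auto simp: decomposable_def)
  define c1 where "c1 = hc (Hs h (Suc k)) 1"
  define c2 where "c2 = hc (Hs h (Suc k)) 2"
  have "Hs h (Suc (Suc (Suc k))) = fls_X ^ 2 * Hs h (Suc k) - fls_const c1 * h - fls_const c2"
    by (simp add: c1_def c2_def)
  also have "\<dots> = lcomb h ([:0, 1:] * a - [:c2:]) ([:0, 1:] * b - [:c1:])"
    unfolding ab eval_lam_diff eval_lam_mult eval_lam_lambda eval_lam_const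
    by (simp add: algebra_simps)
  finally show ?case
    unfolding decomposable_def by blast
qed

lemma Rs_decomposable: "decomposable h (Rs h j)"
  unfolding Rs_def
  by (intro decomposable_add Hs_decomposable decomposable_sum decomposable_const_mult
      decomposable_const)

lemma Vmat_decomp:
  assumes "is_h h"
  obtains p q a b where "Vmat h j = mat2 p q a b"
    and "Hs h j = lcomb h p q" and "Rs h j = lcomb h a b"
  by (rule that[OF Vmat_def])
    (simp_all add: lcomb_decomp[OF assms Hs_decomposable] lcomb_decomp[OF assms Rs_decomposable])

section \<open>Leading terms of \<open>H^(k)\<close> and of the flows\<close>

lemma fls_deg_le_X_times_sub:
  fixes T :: "'a::ring_1 fls"
  shows "fls_deg_le T (-1) \<Longrightarrow> fls_deg_le (fls_X * T - fls_const (fls_nth T (-1))) (-1)"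
  unfolding fls_deg_le_def fls_X_times_conv_shift fls_shift_nth by auto

lemma fls_deg_le_h_times_sub:
  assumes h: "is_h h" and T: "fls_deg_le T (-1)"
  shows "fls_deg_le (h * T - fls_const (fls_nth T (-1))) (-1)"
proof -
  have eq: "h * T - fls_const (fls_nth T (-1))
      = (fls_X * T - fls_const (fls_nth T (-1))) + (h - fls_X) * T"
    by (simp add: algebra_simps)
  have "fls_deg_le ((h - fls_X) * T) (-1)"
    using fls_deg_le_mult[OF fls_deg_le_h_minus_X[OF h] T] by (rule fls_deg_le_mono) simp
  then show ?thesis
    unfolding eq by (intro fls_deg_le_add fls_deg_le_X_times_sub T)
qed

lemma Hs_sub_X_power_deg_le: "is_h h \<Longrightarrow> fls_deg_le (Hs h k - fls_X ^ k) (-1)"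
proof (induction h k rule: Hs.induct)
  case (2 h)
  then show ?case by (simp add: fls_deg_le_h_minus_X)
next
  case (4 h k)
  define T where "T = Hs h (Suc k) - fls_X ^ Suc k"
  have T: "fls_deg_le T (-1)"
    using 4 by (simp add: T_def)
  have "Hs h (Suc (Suc (Suc k))) - fls_X ^ Suc (Suc (Suc k))
      = fls_X ^ 2 * T - fls_const (fls_nth T (-1)) * h - fls_const (fls_nth T (-2))"
    by (simp add: T_def hc_def algebra_simps power_add [symmetric])
  moreover have "fls_nth T (n - 2) = 0" if "2 \<le> n" for n
    using T that by (intro fls_deg_leD) auto
  ultimately show ?case
    using is_h_nth[OF "4.prems"]
    by (auto simp: fls_deg_le_def fls_X_power_times_conv_shift)
qed (simp_all add: power2_eq_square)

lemma Hs_sub_Hs_deg_le: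
  assumes "is_h h" and "is_h h'"
  shows "fls_deg_le (Hs h N - Hs h' N) (-1)"
proof -
  have "Hs h N - Hs h' N = (Hs h N - fls_X ^ N) - (Hs h' N - fls_X ^ N)"
    by simp
  then show ?thesis
    by (simp only:) (intro fls_deg_le_diff Hs_sub_X_power_deg_le assms)
qed

lemma fls_deg_le_h_times_X_power_sub:
  assumes h: "is_h h"
  shows "fls_deg_le (h * fls_X ^ j - fls_X ^ Suc j
           - (\<Sum>l=1..j. fls_const (hc h l) * fls_X ^ (j - l))) (-1)"
  unfolding fls_deg_le_def
proof (intro allI impI)
  fix n :: int assume n: "-1 < n"
  have sum: "fls_nth (\<Sum>l=1..j. fls_const (hc h l) * fls_X ^ (j - l)) n
      = (\<Sum>l=1..j. if n = int (j - l) then hc h l else 0)"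
    by (simp add: fls_nth_sum if_distrib cong: if_cong)
  show "fls_nth (h * fls_X ^ j - fls_X ^ Suc j
           - (\<Sum>l=1..j. fls_const (hc h l) * fls_X ^ (j - l))) n = 0"
  proof (cases "int j \<le> n")
    case True
    then show ?thesis
      using is_h_nth[OF h, of "n - int j"] unfolding fls_minus_nth sum
      by (auto simp: fls_X_power_times_conv_shift intro!: sum.neutral)
  next
    case False
    have "(\<Sum>l=1..j. if n = int (j - l) then hc h l else 0)
        = (\<Sum>l=1..j. if l = j - nat n then hc h l else 0)"
      using False n by (intro sum.cong) auto
    also have "\<dots> = fls_nth h (n - int j)"
      using False n by (simp add: hc_def)
    finally show ?thesis
      using False unfolding fls_minus_nth sum by (simp add: fls_X_power_times_conv_shift)
  qed
qed

lemma flow_deg_le: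
  assumes h: "is_h h"
  shows "fls_deg_le (flow h j) (-1)"
proof -
  define T where "T k = Hs h k - fls_X ^ k" for k
  have T: "fls_deg_le (T k) (-1)" for k
    using Hs_sub_X_power_deg_le[OF h] by (simp add: T_def)
  have eq: "flow h j = T (Suc j) + (\<Sum>l=1..j. fls_const (hc h l) * T (j - l))
      - (h * T j - fls_const (fls_nth (T j) (-1)))
      - (h * fls_X ^ j - fls_X ^ Suc j - (\<Sum>l=1..j. fls_const (hc h l) * fls_X ^ (j - l)))"
    by (simp add: flow_def Rs_def T_def hc_def algebra_simps sum_subtractf)
  show ?thesis
    unfolding eq
    by (intro fls_deg_le_add fls_deg_le_diff fls_deg_le_sum fls_deg_le_const_mult T
        fls_deg_le_h_times_sub[OF h] fls_deg_le_h_times_X_power_sub[OF h])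
qed

section \<open>Truncation of \<open>\<lambda>^-k V^(N)\<close>\<close>

lemma coeff_plus_shift: "coeff (plus_shift k p) j = coeff p (j + k)"
  by (simp add: plus_shift_def nth_default_drop nth_default_coeffs_eq)

lemma fls_deg_le_eval_lam_sub_plus_shift:
  "fls_deg_le (eval_lam p - fls_X ^ (2 * k) * eval_lam (plus_shift k p)) (2 * int k - 2)"
  unfolding fls_deg_le_def
proof (intro allI impI)
  fix n :: int assume n: "2 * int k - 2 < n"
  have "nat ((n - 2 * int k) div 2) + k = nat (n div 2)" if "even n"
    using n that by (auto elim!: evenE)
  moreover have "2 * int k \<le> n" if "even n"
    using n that by (auto elim!: evenE)
  ultimately show "fls_nth (eval_lam p - fls_X ^ (2 * k) * eval_lam (plus_shift k p)) n = 0"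
    by (auto simp: fls_X_power_times_conv_shift fls_nth_eval_lam coeff_plus_shift)
qed

lemma fls_nth_lcomb_plus_shift:
  assumes h: "is_h h" and n: "0 \<le> n"
  shows "fls_nth (lcomb h (plus_shift k a) (plus_shift k b)) n = fls_nth (lcomb h a b) (n + 2 * int k)"
proof -
  define Da where "Da = eval_lam a - fls_X ^ (2 * k) * eval_lam (plus_shift k a)"
  define Db where "Db = eval_lam b - fls_X ^ (2 * k) * eval_lam (plus_shift k b)"
  have "fls_deg_le Da (2 * int k - 1)"
    unfolding Da_def using fls_deg_le_eval_lam_sub_plus_shift by (rule fls_deg_le_mono) simp
  moreover have "fls_deg_le (Db * h) (2 * int k - 1)"
    using fls_deg_le_mult[OF fls_deg_le_eval_lam_sub_plus_shift fls_deg_le_h[OF h]]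
    by (simp add: Db_def)
  ultimately have "fls_nth (Da + Db * h) (n + 2 * int k) = 0"
    using n by (intro fls_deg_leD[OF fls_deg_le_add]) auto
  moreover have "lcomb h a b = fls_X ^ (2 * k) * lcomb h (plus_shift k a) (plus_shift k b) + (Da + Db * h)"
    by (simp add: Da_def Db_def algebra_simps)
  ultimately show ?thesis
    by (simp add: fls_X_power_times_conv_shift)
qed

lemma plus_shift_Hs_decomp:
  assumes h: "is_h h"
    and N: "Hs h (m + 2 * k) = lcomb h p q" and m: "Hs h m = lcomb h p' q'"
  shows "plus_shift k p = p' \<and> plus_shift k q = q'"
proof -
  have "fls_nth (lcomb h (plus_shift k p - p') (plus_shift k q - q')) n = 0" if n: "-1 < n" for n
  proof -
    have "fls_nth (lcomb h (plus_shift k p) (plus_shift k q)) n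
        = fls_nth (Hs h (m + 2 * k)) (n + 2 * int k)"
      using fls_nth_lcomb_plus_shift[OF h, of n k p q] n N by simp
    also have "\<dots> = fls_nth (fls_X ^ (m + 2 * k)) (n + 2 * int k)"
      using Hs_sub_X_power_deg_le[OF h, of "m + 2 * k"] n by (auto simp: fls_deg_le_def)
    also have "\<dots> = fls_nth (Hs h m) n"
      using Hs_sub_X_power_deg_le[OF h, of m] n by (auto simp: fls_deg_le_def)
    finally show ?thesis
      using m by (simp add: algebra_simps)
  qed
  then have "plus_shift k p - p' = 0 \<and> plus_shift k q - q' = 0"
    by (intro lcomb_deg_le_neg_imp_0[OF h]) (simp add: fls_deg_le_def)
  then show ?thesis by simp
qed

text \<open>Here \<open>R^(m+2k) = h H^(m+2k)\<close>, whose shifted nonnegative part is that of \<open>h H^(m)\<close>: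
  this is \<open>R^(m)\<close> plus the constant term of \<open>h (H^(m) - z^m)\<close>.\<close>
lemma plus_shift_Rs_decomp:
  assumes h: "is_h h" and k: "1 \<le> k" and flow: "flow h (m + 2 * k) = 0"
    and N: "Rs h (m + 2 * k) = lcomb h a b" and m: "Rs h m = lcomb h a' b'"
  shows "plus_shift k a = a' + [:- fls_nth (Hs h m) (-1):] \<and> plus_shift k b = b'"
proof -
  define \<delta> where "\<delta> = - fls_nth (Hs h m) (-1)"
  define S where "S = Hs h (m + 2 * k) - fls_X ^ (m + 2 * k)"
  define T where "T = Hs h m - fls_X ^ m"
  have S: "fls_deg_le (h * S - fls_const (fls_nth S (-1))) (-1)"
    unfolding S_def by (intro fls_deg_le_h_times_sub[OF h] Hs_sub_X_power_deg_le[OF h])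
  have T: "fls_deg_le (h * T - fls_const (fls_nth T (-1))) (-1)"
    unfolding T_def by (intro fls_deg_le_h_times_sub[OF h] Hs_sub_X_power_deg_le[OF h])
  have RN: "Rs h (m + 2 * k) = h * Hs h (m + 2 * k)"
    using flow by (simp add: flow_def algebra_simps)
  have "fls_nth (lcomb h (plus_shift k a - (a' + [:\<delta>:])) (plus_shift k b - b')) n = 0"
    if n: "-1 < n" for n
  proof -
    have "fls_nth (lcomb h (plus_shift k a) (plus_shift k b)) n
        = fls_nth (h * Hs h (m + 2 * k)) (n + 2 * int k)"
      using fls_nth_lcomb_plus_shift[OF h, of n k a b] n by (simp add: N [symmetric] RN)
    also have "\<dots> = fls_nth (h * fls_X ^ (m + 2 * k)) (n + 2 * int k) + fls_nth (h * S) (n + 2 * int k)"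
      by (simp add: S_def algebra_simps)
    also have "fls_nth (h * S) (n + 2 * int k) = 0"
      using S n k by (auto simp: fls_deg_le_def)
    also have "fls_nth (h * fls_X ^ (m + 2 * k)) (n + 2 * int k) = fls_nth (h * Hs h m - h * T) n"
      by (simp add: T_def algebra_simps fls_X_power_times_conv_shift)
    also have "\<dots> = fls_nth (Rs h m) n + (if n = 0 then \<delta> else 0)"
      using T flow_deg_le[OF h, of m] n
      by (auto simp: fls_deg_le_def flow_def T_def \<delta>_def)
    finally show ?thesis
      using m by (simp add: algebra_simps)
  qed
  then have "plus_shift k a - (a' + [:\<delta>:]) = 0 \<and> plus_shift k b - b' = 0"
    by (intro lcomb_deg_le_neg_imp_0[OF h]) (simp add: fls_deg_le_def)
  then show ?thesis
    by (simp add: \<delta>_def)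
qed

lemma mat2_mult:
  "mat2 a b c d ** mat2 a' b' c' d' =
   mat2 (a * a' + b * c') (a * b' + b * d') (c * a' + d * c') (c * b' + d * d')"
  unfolding mat2_def matrix_matrix_mult_def by (simp add: vec_eq_iff forall_2 sum_2)

lemma mat2_diff: "mat2 a b c d - mat2 a' b' c' d' = mat2 (a - a') (b - b') (c - c') (d - d')"
  unfolding mat2_def by (simp add: vec_eq_iff forall_2)

lemma mat2_add: "mat2 a b c d + mat2 a' b' c' d' = mat2 (a + a') (b + b') (c + c') (d + d')"
  unfolding mat2_def by (simp add: vec_eq_iff forall_2)

lemma cscale_mat2: "cscale x (mat2 a b c d) = mat2 (smult x a) (smult x b) (smult x c) (smult x d)"
  unfolding mat2_def cscale_def by (simp add: vec_eq_iff forall_2)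

lemma plus_mat_mat2:
  "plus_mat k (mat2 a b c d) = mat2 (plus_shift k a) (plus_shift k b) (plus_shift k c) (plus_shift k d)"
  unfolding mat2_def plus_mat_def by (simp add: vec_eq_iff forall_2)

lemma comm_mat2:
  "comm (mat2 a b c d) (mat2 a' b' c' d') =
   mat2 (a * a' + b * c' - (a' * a + b' * c)) (a * b' + b * d' - (a' * b + b' * d))
        (c * a' + d * c' - (c' * a + d' * c)) (c * b' + d * d' - (c' * b + d' * d))"
  unfolding comm_def mat2_mult mat2_diff ..

lemma comm_add_left: "comm (P + Q) R = comm P R + comm Q R"
  by (simp add: comm_def matrix_matrix_mult_def vec_eq_iff algebra_simps sum.distrib)

lemma comm_cscale_left: "comm (cscale c P) R = cscale c (comm P R)"
proof -
  have smult_sum: "smult c (sum f S) = (\<Sum>i\<in>S. smult c (f i))" for f :: "2 \<Rightarrow> complex poly" and S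
    by (induction S rule: infinite_finite_induct) (simp_all add: smult_add_right)
  show ?thesis
    by (simp add: comm_def cscale_def matrix_matrix_mult_def vec_eq_iff smult_diff_right smult_sum)
qed

lemma plus_mat_Vmat:
  assumes h: "is_h h" and k: "1 \<le> k" and flow: "flow h (m + 2 * k) = 0"
  shows "plus_mat k (Vmat h (m + 2 * k)) = Vmat h m + cscale (- fls_nth (Hs h m) (-1)) Amat"
proof -
  obtain p q a b where V: "Vmat h (m + 2 * k) = mat2 p q a b"
    and H: "Hs h (m + 2 * k) = lcomb h p q" and R: "Rs h (m + 2 * k) = lcomb h a b"
    using Vmat_decomp[OF h] .
  obtain p' q' a' b' where V': "Vmat h m = mat2 p' q' a' b'"
    and H': "Hs h m = lcomb h p' q'" and R': "Rs h m = lcomb h a' b'"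
    using Vmat_decomp[OF h] .
  show ?thesis
    using plus_shift_Hs_decomp[OF h H H'] plus_shift_Rs_decomp[OF h k flow R R']
    by (simp add: V V' plus_mat_mat2 Amat_def cscale_mat2 mat2_add)
qed

section \<open>Differentiating the decomposition along \<open>h + \<epsilon> f\<close>\<close>

definition converges_at_0 :: "('a::{zero,topological_space} \<Rightarrow> 'b::topological_space) \<Rightarrow> bool" where
  "converges_at_0 F \<longleftrightarrow> (\<exists>L. (F \<longlongrightarrow> L) (at 0))"

lemma converges_at_0_const [simp]: "converges_at_0 (\<lambda>e. c)"
  by (auto simp: converges_at_0_def)

lemma converges_at_0_ident: "converges_at_0 (\<lambda>e. e)"
  by (auto simp: converges_at_0_def intro: tendsto_ident_at)

lemma converges_at_0_add:
  fixes F G :: "'a::{zero,topological_space} \<Rightarrow> 'b::topological_monoid_add"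
  shows "converges_at_0 F \<Longrightarrow> converges_at_0 G \<Longrightarrow> converges_at_0 (\<lambda>e. F e + G e)"
  by (auto simp: converges_at_0_def intro: tendsto_add)

lemma converges_at_0_diff:
  fixes F G :: "'a::{zero,topological_space} \<Rightarrow> 'b::topological_group_add"
  shows "converges_at_0 F \<Longrightarrow> converges_at_0 G \<Longrightarrow> converges_at_0 (\<lambda>e. F e - G e)"
  by (auto simp: converges_at_0_def intro: tendsto_diff)

lemma converges_at_0_mult:
  fixes F G :: "'a::{zero,topological_space} \<Rightarrow> 'b::real_normed_algebra"
  shows "converges_at_0 F \<Longrightarrow> converges_at_0 G \<Longrightarrow> converges_at_0 (\<lambda>e. F e * G e)"
  by (auto simp: converges_at_0_def intro: tendsto_mult)

lemma converges_at_0_cong: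
  "\<forall>\<^sub>F e in at 0. F e = G e \<Longrightarrow> converges_at_0 G \<Longrightarrow> converges_at_0 F"
  unfolding converges_at_0_def using tendsto_cong by blast

lemma has_field_derivative_at_0_if_expansion:
  fixes F B :: "'a::real_normed_field \<Rightarrow> 'a"
  assumes F: "\<And>e. e \<noteq> 0 \<Longrightarrow> F e = F 0 + e * b + e^2 * B e" and B: "converges_at_0 B"
  shows "(F has_field_derivative b) (at 0)"
proof -
  obtain L where "(B \<longlongrightarrow> L) (at 0)"
    using B by (auto simp: converges_at_0_def)
  then have "((\<lambda>e. b + e * B e) \<longlongrightarrow> b + 0 * L) (at 0)"
    by (intro tendsto_intros)
  moreover have "\<forall>\<^sub>F e in at 0. (F e - F 0) / (e - 0) = b + e * B e"
    unfolding eventually_at_filter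
    by (intro always_eventually allI impI) (simp add: F field_simps power2_eq_square)
  ultimately show ?thesis
    unfolding has_field_derivative_iff using tendsto_cong by fastforce
qed

definition lead_elem :: "complex fls \<Rightarrow> nat \<Rightarrow> complex fls" where
  "lead_elem h d = fls_X ^ (2 * (d div 2)) * (if even d then 1 else h)"

lemma fls_nth_lead_elem:
  assumes "is_h h" and "int d \<le> n"
  shows "fls_nth (lead_elem h d) n = (if n = int d then 1 else 0)"
  using assms is_h_nth[OF assms(1), of "n - int d + 1"]
  by (auto simp: lead_elem_def fls_X_power_times_conv_shift elim!: evenE oddE)

lemma const_mult_lead_elem:
  "fls_const c * lead_elem h d
     = lcomb h (if even d then monom c (d div 2) else 0) (if even d then 0 else monom c (d div 2))"
  by (simp add: lead_elem_def eval_lam_monom algebra_simps)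

lemma converges_at_0_lead_elem:
  assumes "\<And>n. converges_at_0 (\<lambda>e. fls_nth (H e) n)" and "converges_at_0 c"
  shows "converges_at_0 (\<lambda>e. fls_nth (fls_const (c e) * lead_elem (H e) d) n)"
  using assms
  by (cases "even d"; cases "n = int d")
    (simp_all add: lead_elem_def fls_X_power_times_conv_shift converges_at_0_mult)

text \<open>Induction on the degree bound: the top coefficient \<open>c\<close> of \<open>G\<close> is removed by subtracting
  \<open>c \<lambda>^(d div 2)\<close> from \<open>\<alpha>\<close> (\<open>d\<close> even) or from \<open>\<beta>\<close> (\<open>d\<close> odd).\<close>
lemma decomp_coeffs_converge:
  fixes H G :: "complex \<Rightarrow> complex fls" and \<alpha> \<beta> :: "complex \<Rightarrow> complex poly"
  assumes H: "\<And>e. is_h (H e)" "\<And>n. converges_at_0 (\<lambda>e. fls_nth (H e) n)"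
    and G: "\<And>e. fls_deg_le (G e) (int d - 1)" "\<And>n. converges_at_0 (\<lambda>e. fls_nth (G e) n)"
    and close: "\<forall>\<^sub>F e in at 0. fls_deg_le (lcomb (H e) (\<alpha> e) (\<beta> e) - G e) (-1)"
  shows "(\<forall>j. converges_at_0 (\<lambda>e. coeff (\<alpha> e) j)) \<and> (\<forall>j. converges_at_0 (\<lambda>e. coeff (\<beta> e) j))
    \<and> (\<forall>n. converges_at_0 (\<lambda>e. fls_nth (lcomb (H e) (\<alpha> e) (\<beta> e)) n))"
  using G close
proof (induction d arbitrary: \<alpha> \<beta> G)
  case 0
  have "\<forall>\<^sub>F e in at 0. \<alpha> e = 0 \<and> \<beta> e = 0"
    using "0.prems"(3)
  proof eventually_elim
    case (elim e)
    then have "fls_deg_le (lcomb (H e) (\<alpha> e) (\<beta> e) - G e + G e) (-1)"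
      using "0.prems"(1)[of e] by (intro fls_deg_le_add) simp_all
    then show ?case
      by (intro lcomb_deg_le_neg_imp_0[OF H(1)]) simp
  qed
  then have "\<forall>\<^sub>F e in at 0. coeff (\<alpha> e) j = 0" "\<forall>\<^sub>F e in at 0. coeff (\<beta> e) j = 0"
    "\<forall>\<^sub>F e in at 0. fls_nth (lcomb (H e) (\<alpha> e) (\<beta> e)) n = 0" for j n
    by (auto elim: eventually_mono)
  moreover have zero: "converges_at_0 F" if "\<forall>\<^sub>F e in at 0. F e = 0" for F :: "complex \<Rightarrow> complex"
    using converges_at_0_cong[OF that] by simp
  ultimately show ?case
    by (intro conjI allI zero)
next
  case (Suc d)
  define c where "c e = fls_nth (G e) (int d)" for e
  define M where "M e = fls_const (c e) * lead_elem (H e) d" for e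
  define \<alpha>' where "\<alpha>' e = \<alpha> e - (if even d then monom (c e) (d div 2) else 0)" for e
  define \<beta>' where "\<beta>' e = \<beta> e - (if even d then 0 else monom (c e) (d div 2))" for e
  have lcomb_split: "lcomb (H e) (\<alpha> e) (\<beta> e) = lcomb (H e) (\<alpha>' e) (\<beta>' e) + M e" for e
    by (simp add: \<alpha>'_def \<beta>'_def M_def const_mult_lead_elem algebra_simps)
  have c: "converges_at_0 c"
    unfolding c_def by (rule Suc.prems(2))
  have M: "converges_at_0 (\<lambda>e. fls_nth (M e) n)" for n
    unfolding M_def by (rule converges_at_0_lead_elem[OF H(2) c])
  have "(\<forall>j. converges_at_0 (\<lambda>e. coeff (\<alpha>' e) j)) \<and> (\<forall>j. converges_at_0 (\<lambda>e. coeff (\<beta>' e) j))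
    \<and> (\<forall>n. converges_at_0 (\<lambda>e. fls_nth (lcomb (H e) (\<alpha>' e) (\<beta>' e)) n))"
  proof (rule Suc.IH)
    show "fls_deg_le (G e - M e) (int d - 1)" for e
      using Suc.prems(1)[of e]
      by (auto simp: fls_deg_le_def c_def M_def fls_nth_lead_elem H(1))
    show "converges_at_0 (\<lambda>e. fls_nth (G e - M e) n)" for n
      by (simp add: converges_at_0_diff Suc.prems(2) M)
    show "\<forall>\<^sub>F e in at 0. fls_deg_le (lcomb (H e) (\<alpha>' e) (\<beta>' e) - (G e - M e)) (-1)"
      using Suc.prems(3) unfolding lcomb_split by eventually_elim (simp add: algebra_simps)
  qed
  moreover have "coeff (\<alpha> e) i = coeff (\<alpha>' e) i + (if even d \<and> i = d div 2 then c e else 0)"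
    and "coeff (\<beta> e) i = coeff (\<beta>' e) i + (if odd d \<and> i = d div 2 then c e else 0)" for e i
    by (auto simp: \<alpha>'_def \<beta>'_def)
  moreover have "converges_at_0 (\<lambda>e. if P then c e else 0)" for P
    using c by (cases P) simp_all
  ultimately show ?case
    using M by (simp add: lcomb_split converges_at_0_add)
qed

lemma lcomb_second_order_expansion:
  assumes "lcomb h X1 Y1 + eval_lam Y0 * f = L"
  shows "lcomb (h + fls_const e * f) X Y - lcomb h X0 Y0 - fls_const e * L
      = lcomb (h + fls_const e * f) (X - X0 - smult e X1) (Y - Y0 - smult e Y1)
        + fls_const (e^2) * (eval_lam Y1 * f)"
  by (simp add: assms [symmetric] algebra_simps power2_eq_square flip: fls_const_mult_const)

text \<open>The second-order remainders \<open>(X \<epsilon> - X 0 - \<epsilon> X1) / \<epsilon>\<^sup>2\<close> fall under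
  \<open>decomp_coeffs_converge\<close> with \<open>G - Y1 f\<close> in place of \<open>G\<close>.\<close>
lemma decomp_coeffs_has_derivative:
  fixes X Y :: "complex \<Rightarrow> complex poly" and F G :: "complex \<Rightarrow> complex fls"
  assumes h: "is_h h" and f: "fls_deg_le f (-1)"
    and F: "\<And>e. F e = lcomb (h + fls_const e * f) (X e) (Y e)"
    and L: "lcomb h X1 Y1 + eval_lam (Y 0) * f = L"
    and G: "\<And>e. fls_deg_le (G e) (int d)" "\<And>n. converges_at_0 (\<lambda>e. fls_nth (G e) n)"
    and rem: "\<And>e. e \<noteq> 0 \<Longrightarrow> fls_deg_le (F e - F 0 - fls_const e * L - fls_const (e^2) * G e) (-1)"
  shows "((\<lambda>e. coeff (X e) j) has_field_derivative coeff X1 j) (at 0)"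
    and "((\<lambda>e. coeff (Y e) j) has_field_derivative coeff Y1 j) (at 0)"
    and "converges_at_0 (\<lambda>e. fls_nth (fls_const (1 / e^2) * (F e - F 0 - fls_const e * L)) n)"
proof -
  define H where "H e = h + fls_const e * f" for e
  define \<alpha> where "\<alpha> e = smult (1 / e^2) (X e - X 0 - smult e X1)" for e
  define \<beta> where "\<beta> e = smult (1 / e^2) (Y e - Y 0 - smult e Y1)" for e
  have expand: "F e - F 0 - fls_const e * L
      = lcomb (H e) (X e - X 0 - smult e X1) (Y e - Y 0 - smult e Y1)
        + fls_const (e^2) * (eval_lam Y1 * f)" for e
    using lcomb_second_order_expansion[OF L, where e = e and X = "X e" and Y = "Y e" and X0 = "X 0"]
    by (simp add: F H_def)
  have inverse: "fls_const (e^2) * fls_const (1 / e^2) = 1" if "e \<noteq> 0" for e :: complex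
    using that by simp
  have remainder: "fls_const (1 / e^2) * (F e - F 0 - fls_const e * L)
      = lcomb (H e) (\<alpha> e) (\<beta> e) + eval_lam Y1 * f" if "e \<noteq> 0" for e
    using that unfolding expand \<alpha>_def \<beta>_def
    by (simp add: algebra_simps inverse flip: fls_const_mult_const)
  have "(\<forall>j. converges_at_0 (\<lambda>e. coeff (\<alpha> e) j)) \<and> (\<forall>j. converges_at_0 (\<lambda>e. coeff (\<beta> e) j))
    \<and> (\<forall>n. converges_at_0 (\<lambda>e. fls_nth (lcomb (H e) (\<alpha> e) (\<beta> e)) n))"
  proof (rule decomp_coeffs_converge[where G = "\<lambda>e. G e - eval_lam Y1 * f"
        and d = "d + 2 * degree Y1 + 1"])
    show "is_h (H e)" for e
      unfolding H_def by (rule is_h_add_const_mult[OF h f])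
    show "converges_at_0 (\<lambda>e. fls_nth (H e) n)" for n
      by (simp add: H_def converges_at_0_add converges_at_0_mult converges_at_0_ident)
    show "fls_deg_le (G e - eval_lam Y1 * f) (int (d + 2 * degree Y1 + 1) - 1)" for e
      using fls_deg_le_mult[OF fls_deg_le_eval_lam f, of Y1] G(1)[of e]
      by (intro fls_deg_le_diff) (auto elim: fls_deg_le_mono)
    show "converges_at_0 (\<lambda>e. fls_nth (G e - eval_lam Y1 * f) n)" for n
      by (simp add: G(2) converges_at_0_diff)
    have "fls_deg_le (lcomb (H e) (\<alpha> e) (\<beta> e) - (G e - eval_lam Y1 * f)) (-1)" if "e \<noteq> 0" for e
    proof -
      have "fls_const (1 / e^2) * (F e - F 0 - fls_const e * L - fls_const (e^2) * G e)
          = fls_const (1 / e^2) * (F e - F 0 - fls_const e * L) - G e"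
        using that by (simp add: right_diff_distrib mult.assoc [symmetric])
      also have "\<dots> = lcomb (H e) (\<alpha> e) (\<beta> e) - (G e - eval_lam Y1 * f)"
        using remainder[OF that] by simp
      finally show ?thesis
        using fls_deg_le_const_mult[OF rem[OF that], of "1 / e^2"] by simp
    qed
    then show "\<forall>\<^sub>F e in at 0. fls_deg_le (lcomb (H e) (\<alpha> e) (\<beta> e) - (G e - eval_lam Y1 * f)) (-1)"
      by (simp add: eventually_at_filter)
  qed
  then have \<alpha>: "converges_at_0 (\<lambda>e. coeff (\<alpha> e) j)" and \<beta>: "converges_at_0 (\<lambda>e. coeff (\<beta> e) j)"
    and lcomb: "converges_at_0 (\<lambda>e. fls_nth (lcomb (H e) (\<alpha> e) (\<beta> e)) n)"
    by blast+
  show "((\<lambda>e. coeff (X e) j) has_field_derivative coeff X1 j) (at 0)"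
    by (rule has_field_derivative_at_0_if_expansion[OF _ \<alpha>]) (simp add: \<alpha>_def)
  show "((\<lambda>e. coeff (Y e) j) has_field_derivative coeff Y1 j) (at 0)"
    by (rule has_field_derivative_at_0_if_expansion[OF _ \<beta>]) (simp add: \<beta>_def)
  have "\<forall>\<^sub>F e in at 0. fls_nth (fls_const (1 / e^2) * (F e - F 0 - fls_const e * L)) n
      = fls_nth (lcomb (H e) (\<alpha> e) (\<beta> e)) n + fls_nth (eval_lam Y1 * f) n"
    unfolding eventually_at_filter
    by (intro always_eventually allI impI) (metis fls_plus_nth remainder)
  then show "converges_at_0 (\<lambda>e. fls_nth (fls_const (1 / e^2) * (F e - F 0 - fls_const e * L)) n)"
    by (rule converges_at_0_cong) (intro converges_at_0_add lcomb converges_at_0_const)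
qed

lemma Hs_decomp_has_derivative:
  assumes h: "is_h h" and f: "fls_deg_le f (-1)"
    and PQ: "\<And>e. Hs (h + fls_const e * f) N = lcomb (h + fls_const e * f) (P e) (Q e)"
    and row1: "lcomb h p1 q1 = - (eval_lam (Q 0) * f)"
  shows "((\<lambda>e. coeff (P e) j) has_field_derivative coeff p1 j) (at 0)"
    and "((\<lambda>e. coeff (Q e) j) has_field_derivative coeff q1 j) (at 0)"
    and "converges_at_0 (\<lambda>e. fls_nth (fls_const (1 / e^2) * (Hs (h + fls_const e * f) N - Hs h N)) n)"
proof -
  define F where "F e = Hs (h + fls_const e * f) N" for e
  have F: "F e = lcomb (h + fls_const e * f) (P e) (Q e)" for e
    by (simp add: F_def PQ)
  have L: "lcomb h p1 q1 + eval_lam (Q 0) * f = 0"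
    using row1 by simp
  have rem: "fls_deg_le (F e - F 0 - fls_const e * 0 - fls_const (e^2) * 0) (-1)" for e
    by (simp add: F_def Hs_sub_Hs_deg_le is_h_add_const_mult[OF h f] h)
  note deriv = decomp_coeffs_has_derivative[where d = 0, OF h f F L fls_deg_le_0 converges_at_0_const rem]
  show "((\<lambda>e. coeff (P e) j) has_field_derivative coeff p1 j) (at 0)"
    and "((\<lambda>e. coeff (Q e) j) has_field_derivative coeff q1 j) (at 0)"
    and "converges_at_0 (\<lambda>e. fls_nth (fls_const (1 / e^2) * (Hs (h + fls_const e * f) N - Hs h N)) n)"
    using deriv by (simp_all add: F_def)
qed

text \<open>At \<open>\<epsilon> = 0\<close> we have \<open>R^(N) = h H^(N)\<close>, and \<open>H^(N)\<close> moves by \<open>\<epsilon>\<^sup>2 T\<close> with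
  \<open>T = O(z^-1)\<close>; so the second-order part of \<open>R^(N)\<close> is the constant term of \<open>h T\<close>.\<close>
lemma Rs_decomp_has_derivative:
  assumes h: "is_h h" and f: "fls_deg_le f (-1)" and flow: "flow h N = 0"
    and AB: "\<And>e. Rs (h + fls_const e * f) N = lcomb (h + fls_const e * f) (A e) (B e)"
    and row2: "lcomb h a1 b1 = (Hs h N - eval_lam (B 0)) * f"
    and T_conv: "\<And>n. converges_at_0
      (\<lambda>e. fls_nth (fls_const (1 / e^2) * (Hs (h + fls_const e * f) N - Hs h N)) n)"
  shows "((\<lambda>e. coeff (A e) j) has_field_derivative coeff a1 j) (at 0)"
    and "((\<lambda>e. coeff (B e) j) has_field_derivative coeff b1 j) (at 0)"
proof -
  define he where "he e = h + fls_const e * f" for e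
  have he: "is_h (he e)" for e
    unfolding he_def by (rule is_h_add_const_mult[OF h f])
  define T where "T e = fls_const (1 / e^2) * (Hs (he e) N - Hs h N)" for e
  define F where "F e = Rs (he e) N" for e
  have F: "F e = lcomb (h + fls_const e * f) (A e) (B e)" for e
    by (simp add: F_def he_def AB)
  have L: "lcomb h a1 b1 + eval_lam (B 0) * f = Hs h N * f"
    using row2 by (simp add: algebra_simps)
  have G_deg: "fls_deg_le (fls_const (fls_nth (T e) (-1))) (int 0)" for e
    by (simp add: fls_deg_le_const)
  have G_conv: "converges_at_0 (\<lambda>e. fls_nth (fls_const (fls_nth (T e) (-1))) n)" for n
    using T_conv[of "-1"] by (cases "n = 0") (simp_all add: T_def he_def)
  have rem: "fls_deg_le (F e - F 0 - fls_const e * (Hs h N * f)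
      - fls_const (e^2) * fls_const (fls_nth (T e) (-1))) (-1)" if "e \<noteq> 0" for e
  proof -
    have "Hs (he e) N = Hs h N + fls_const (e^2) * T e"
      using that by (simp add: T_def mult.assoc [symmetric])
    then have "F e - F 0 - fls_const e * (Hs h N * f) - fls_const (e^2) * fls_const (fls_nth (T e) (-1))
        = flow (he e) N + fls_const (e^2) * (he e * T e - fls_const (fls_nth (T e) (-1)))"
      using flow by (simp add: flow_def F_def he_def algebra_simps power2_eq_square)
    moreover have "fls_deg_le (T e) (-1)"
      unfolding T_def by (intro fls_deg_le_const_mult Hs_sub_Hs_deg_le he h)
    ultimately show ?thesis
      by (simp add: fls_deg_le_add flow_deg_le[OF he] fls_deg_le_const_mult
          fls_deg_le_h_times_sub[OF he])
  qed
  show "((\<lambda>e. coeff (A e) j) has_field_derivative coeff a1 j) (at 0)"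
    and "((\<lambda>e. coeff (B e) j) has_field_derivative coeff b1 j) (at 0)"
    using decomp_coeffs_has_derivative[where d = 0, OF h f F L G_deg G_conv rem] by blast+
qed

lemma Vmat_has_derivative:
  assumes h: "is_h h" and f: "fls_deg_le f (-1)" and flow: "flow h N = 0"
    and H: "Hs h N = lcomb h p q" and R: "Rs h N = lcomb h a b"
    and row1: "lcomb h p1 q1 = - (eval_lam q * f)"
    and row2: "lcomb h a1 b1 = (Hs h N - eval_lam b) * f"
  shows "((\<lambda>e. coeff (Vmat (h + fls_const e * f) N $ r $ s) n)
           has_field_derivative coeff (mat2 p1 q1 a1 b1 $ r $ s) n) (at 0)"
proof -
  define he where "he e = h + fls_const e * f" for e
  have he: "is_h (he e)" for e
    unfolding he_def by (rule is_h_add_const_mult[OF h f])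
  define P where "P e = fst (decomp (he e) (Hs (he e) N))" for e
  define Q where "Q e = snd (decomp (he e) (Hs (he e) N))" for e
  define A where "A e = fst (decomp (he e) (Rs (he e) N))" for e
  define B where "B e = snd (decomp (he e) (Rs (he e) N))" for e
  have PQ: "Hs (h + fls_const e * f) N = lcomb (h + fls_const e * f) (P e) (Q e)" for e
    using lcomb_decomp[OF he Hs_decomposable] by (simp add: P_def Q_def he_def)
  have AB: "Rs (h + fls_const e * f) N = lcomb (h + fls_const e * f) (A e) (B e)" for e
    using lcomb_decomp[OF he Rs_decomposable] by (simp add: A_def B_def he_def)
  have "Q 0 = q" "B 0 = b"
    using decomp_eq[OF h H] decomp_eq[OF h R] by (simp_all add: Q_def B_def he_def)
  then have row1': "lcomb h p1 q1 = - (eval_lam (Q 0) * f)"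
    and row2': "lcomb h a1 b1 = (Hs h N - eval_lam (B 0)) * f"
    using row1 row2 by simp_all
  note row1_deriv = Hs_decomp_has_derivative[OF h f PQ row1']
  note row2_deriv = Rs_decomp_has_derivative[OF h f flow AB row2' row1_deriv(3)]
  show ?thesis
    using row1_deriv(1,2) row2_deriv
    by (cases "r = 1"; cases "s = 1") (simp_all add: Vmat_def mat2_def P_def Q_def A_def B_def he_def)
qed

section \<open>The Lax equation\<close>

lemma commutator_row1_identity:
  fixes P Q A B P' Q' A' B' h :: "'a::comm_ring_1"
  assumes "A + B * h = h * (P + Q * h)"
  shows "(P' * P + Q' * A - (P * P' + Q * A')) + (P' * Q + Q' * B - (P * Q' + Q * B')) * h
       = - (Q * (- h * (P' + Q' * h) + (A' + B' * h)))"
proof -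
  have "(P' * P + Q' * A - (P * P' + Q * A')) + (P' * Q + Q' * B - (P * Q' + Q * B')) * h
      + Q * (- h * (P' + Q' * h) + (A' + B' * h)) = Q' * ((A + B * h) - h * (P + Q * h))"
    by (simp add: algebra_simps)
  with assms show ?thesis
    by (simp add: add_eq_0_iff2)
qed

lemma commutator_row2_identity:
  fixes P Q A B P' Q' A' B' h :: "'a::comm_ring_1"
  assumes "A + B * h = h * (P + Q * h)"
  shows "(A' * P + B' * A - (A * P' + B * A')) + (A' * Q + B' * B - (A * Q' + B * B')) * h
       = ((P + Q * h) - B) * (- h * (P' + Q' * h) + (A' + B' * h))"
proof -
  have "(A' * P + B' * A - (A * P' + B * A')) + (A' * Q + B' * B - (A * Q' + B * B')) * h
      - ((P + Q * h) - B) * (- h * (P' + Q' * h) + (A' + B' * h))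
      = (B' - P' - Q' * h) * ((A + B * h) - h * (P + Q * h))"
    by (simp add: algebra_simps)
  with assms show ?thesis
    by simp
qed

lemma Vmat_flow_has_derivative:
  assumes h: "is_h h" and flow: "flow h N = 0"
  shows "((\<lambda>e. coeff (Vmat (h + fls_const e * flow h m) N $ r $ s) n)
           has_field_derivative coeff (comm (Vmat h m) (Vmat h N) $ r $ s) n) (at 0)"
proof -
  obtain p q a b where V: "Vmat h N = mat2 p q a b"
    and H: "Hs h N = lcomb h p q" and R: "Rs h N = lcomb h a b"
    using Vmat_decomp[OF h] .
  obtain p' q' a' b' where V': "Vmat h m = mat2 p' q' a' b'"
    and H': "Hs h m = lcomb h p' q'" and R': "Rs h m = lcomb h a' b'"
    using Vmat_decomp[OF h] .
  have "Rs h N = h * Hs h N"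
    using flow by (simp add: flow_def algebra_simps)
  then have spectral: "lcomb h a b = h * lcomb h p q"
    by (simp only: H R)
  have f: "flow h m = - h * lcomb h p' q' + lcomb h a' b'"
    by (simp add: flow_def H' R')
  show ?thesis
    unfolding V V' comm_mat2
    by (rule Vmat_has_derivative[OF h flow_deg_le[OF h] flow H R])
      (simp_all only: f eval_lam_diff eval_lam_add eval_lam_mult H
        commutator_row1_identity[OF spectral] commutator_row2_identity[OF spectral])
qed

theorem mainTheorem6:
  fixes g i :: nat and h :: "complex fls"
  assumes "g \<ge> 1" and "i < g" and "is_h h" and "flow h (2 * g + 1) = 0"
  shows "\<exists>D c.
     (\<forall>r s n. ((\<lambda>\<epsilon>. coeff (Vmat (h + fls_const \<epsilon> * flow h (2 * i + 1)) (2 * g + 1) $ r $ s) n)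
                 has_field_derivative coeff (D $ r $ s) n) (at 0))
   \<and> comm (plus_mat (g - i) (Vmat h (2 * g + 1))) (Vmat h (2 * g + 1))
       = D + cscale c (comm Amat (Vmat h (2 * g + 1)))"
proof -
  have N: "2 * g + 1 = (2 * i + 1) + 2 * (g - i)"
    using \<open>i < g\<close> by simp
  have "plus_mat (g - i) (Vmat h (2 * g + 1))
      = Vmat h (2 * i + 1) + cscale (- fls_nth (Hs h (2 * i + 1)) (-1)) Amat"
    using plus_mat_Vmat[OF \<open>is_h h\<close>, of "g - i" "2 * i + 1"] \<open>i < g\<close> \<open>flow h (2 * g + 1) = 0\<close>
    by (simp only: N)
  then have "comm (plus_mat (g - i) (Vmat h (2 * g + 1))) (Vmat h (2 * g + 1))
      = comm (Vmat h (2 * i + 1)) (Vmat h (2 * g + 1))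
        + cscale (- fls_nth (Hs h (2 * i + 1)) (-1)) (comm Amat (Vmat h (2 * g + 1)))"
    by (simp only: comm_add_left comm_cscale_left)
  with Vmat_flow_has_derivative[OF \<open>is_h h\<close> \<open>flow h (2 * g + 1) = 0\<close>] show ?thesis
    by blast
qed

end
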